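(* The category $\mathbf{StoneLPries}$ of Stone L-spaces and all L-morphisms between them is a full subcategory of the category $\mathbf{CohLPries}$ of coherent L-spaces and coherent L-morphisms; that is, every Stone L-space is a coherent L-space and every L-morphism between Stone L-spaces is coherent.
   Context: A Priestley space is a Stone space $X$ with a partial order such that clopen upsets separate points. An L-space is a Priestley space in which the downset of each clopen set is clopen and the closure of each open upset is open. ${\sf ClopUp}(X)$ is the set of clopen upsets; $\mathrm{cl}$ denotes closure. An L-morphism is a continuous order-preserving map $f:X\to X'$ between L-spaces with $f^{-1}(\mathrm{cl}\,U)=\mathrm{cl}\,f^{-1}(U)$ for every open upset $U$ of $X'$. The spatial part of $X$ is $Y=\{y\in X\mid{\downarrow}y\text{ clopen}\}$. A Scott upset is a closed upset $F$ with $\min F\subseteq Y$; ${\sf ClopSUp}(X)$ is the set of clopen Scott upsets. A biset is a set that is both an upset and a downset; ${\sf ClopBi}(X)$ is the set of clopen bisets. For $U,V\in{\sf ClopUp}(X)$, $V\ll U$ means that for every open upset $W$, $U\subseteq\mathrm{cl}\,W$ implies $V\subseteq W$; $\ker U=\bigcup\{V\in{\sf ClopUp}(X)\mid V\ll U\}$; $\mathrm{core}\,U=\bigcup\{V\in{\sf ClopSUp}(X)\mid V\subseteq U\}$; $\mathrm{cen}\,U=\bigcup\{V\in{\sf ClopBi}(X)\mid V\subseteq U\}$. $X$ is L-compact if $X=\ker X$. A Stone L-space is an L-compact L-space with $\mathrm{cen}\,U$ dense in $U$ for each $U\in{\sf ClopUp}(X)$. A coherent L-space is an L-compact L-space with $\mathrm{core}\,U$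 dense in $U$ for each $U\in{\sf ClopUp}(X)$ and $\ker(U\cap V)=\ker U\cap\ker V$ for all $U,V\in{\sf ClopUp}(X)$. An L-morphism $f:X_1\to X_2$ is coherent if $f^{-1}(\mathrm{core}\,U)\subseteq\mathrm{core}\,f^{-1}(U)$ for all $U\in{\sf ClopUp}(X_2)$. *)

theory Defs
  imports "HOL-Analysis.Analysis"
begin

text \<open>An ordered topological space is given by a topology T (carrier = topspace T)
together with a relation le, intended as a partial order on the carrier.\<close>

definition clopen_in :: "'a topology \<Rightarrow> 'a set \<Rightarrow> bool" where
  "clopen_in T U \<longleftrightarrow> openin T U \<and> closedin T U"

definition upset :: "'a topology \<Rightarrow> ('a \<Rightarrow> 'a \<Rightarrow> bool) \<Rightarrow> 'a set \<Rightarrow> bool" where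
  "upset T le U \<longleftrightarrow> U \<subseteq> topspace T \<and> (\<forall>x\<in>U. \<forall>y\<in>topspace T. le x y \<longrightarrow> y \<in> U)"

definition downset :: "'a topology \<Rightarrow> ('a \<Rightarrow> 'a \<Rightarrow> bool) \<Rightarrow> 'a set \<Rightarrow> bool" where
  "downset T le U \<longleftrightarrow> U \<subseteq> topspace T \<and> (\<forall>x\<in>U. \<forall>y\<in>topspace T. le y x \<longrightarrow> y \<in> U)"

definition down_of :: "'a topology \<Rightarrow> ('a \<Rightarrow> 'a \<Rightarrow> bool) \<Rightarrow> 'a set \<Rightarrow> 'a set" where
  "down_of T le U = {y \<in> topspace T. \<exists>x\<in>U. le y x}"

definition partial_order_on_space :: "'a topology \<Rightarrow> ('a \<Rightarrow> 'a \<Rightarrow> bool) \<Rightarrow> bool" where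
  "partial_order_on_space T le \<longleftrightarrow>
     (\<forall>x\<in>topspace T. le x x) \<and>
     (\<forall>x\<in>topspace T. \<forall>y\<in>topspace T. le x y \<and> le y x \<longrightarrow> x = y) \<and>
     (\<forall>x\<in>topspace T. \<forall>y\<in>topspace T. \<forall>z\<in>topspace T. le x y \<and> le y z \<longrightarrow> le x z)"

definition stone_space :: "'a topology \<Rightarrow> bool" where
  "stone_space T \<longleftrightarrow> compact_space T \<and> Hausdorff_space T \<and>
     (\<forall>U x. openin T U \<and> x \<in> U \<longrightarrow> (\<exists>V. clopen_in T V \<and> x \<in> V \<and> V \<subseteq> U))"

definition priestley_space :: "'a topology \<Rightarrow> ('a \<Rightarrow> 'a \<Rightarrow> bool) \<Rightarrow> bool" where
  "priestley_space T le \<longleftrightarrow> stone_space T \<and> partial_order_on_space T le \<and>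
     (\<forall>x\<in>topspace T. \<forall>y\<in>topspace T. \<not> le x y \<longrightarrow>
        (\<exists>U. clopen_in T U \<and> upset T le U \<and> x \<in> U \<and> y \<notin> U))"

definition ClopUp :: "'a topology \<Rightarrow> ('a \<Rightarrow> 'a \<Rightarrow> bool) \<Rightarrow> 'a set set" where
  "ClopUp T le = {U. clopen_in T U \<and> upset T le U}"

definition L_space :: "'a topology \<Rightarrow> ('a \<Rightarrow> 'a \<Rightarrow> bool) \<Rightarrow> bool" where
  "L_space T le \<longleftrightarrow> priestley_space T le \<and>
     (\<forall>U. clopen_in T U \<longrightarrow> clopen_in T (down_of T le U)) \<and>
     (\<forall>U. openin T U \<and> upset T le U \<longrightarrow> openin T (T closure_of U))"

definition L_morphism ::
  "'a topology \<Rightarrow> ('a \<Rightarrow> 'a \<Rightarrow> bool) \<Rightarrow> 'b topology \<Rightarrow> ('b \<Rightarrow> 'b \<Rightarrow> bool) \<Rightarrow> ('a \<Rightarrow> 'b) \<Rightarrow> bool" where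
  "L_morphism T1 le1 T2 le2 f \<longleftrightarrow>
     L_space T1 le1 \<and> L_space T2 le2 \<and>
     continuous_map T1 T2 f \<and>
     (\<forall>x\<in>topspace T1. \<forall>y\<in>topspace T1. le1 x y \<longrightarrow> le2 (f x) (f y)) \<and>
     (\<forall>U. openin T2 U \<and> upset T2 le2 U \<longrightarrow>
        {x \<in> topspace T1. f x \<in> T2 closure_of U} = T1 closure_of {x \<in> topspace T1. f x \<in> U})"

definition spatial_part :: "'a topology \<Rightarrow> ('a \<Rightarrow> 'a \<Rightarrow> bool) \<Rightarrow> 'a set" where
  "spatial_part T le = {y \<in> topspace T. clopen_in T (down_of T le {y})}"

definition minimals :: "('a \<Rightarrow> 'a \<Rightarrow> bool) \<Rightarrow> 'a set \<Rightarrow> 'a set" where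
  "minimals le F = {x \<in> F. \<forall>y\<in>F. le y x \<longrightarrow> y = x}"

definition scott_upset :: "'a topology \<Rightarrow> ('a \<Rightarrow> 'a \<Rightarrow> bool) \<Rightarrow> 'a set \<Rightarrow> bool" where
  "scott_upset T le F \<longleftrightarrow> closedin T F \<and> upset T le F \<and> minimals le F \<subseteq> spatial_part T le"

definition ClopSUp :: "'a topology \<Rightarrow> ('a \<Rightarrow> 'a \<Rightarrow> bool) \<Rightarrow> 'a set set" where
  "ClopSUp T le = {U. clopen_in T U \<and> scott_upset T le U}"

definition ClopBi :: "'a topology \<Rightarrow> ('a \<Rightarrow> 'a \<Rightarrow> bool) \<Rightarrow> 'a set set" where
  "ClopBi T le = {U. clopen_in T U \<and> upset T le U \<and> downset T le U}"

definition way_below :: "'a topology \<Rightarrow> ('a \<Rightarrow> 'a \<Rightarrow> bool) \<Rightarrow> 'a set \<Rightarrow> 'a set \<Rightarrow> bool" where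
  "way_below T le V U \<longleftrightarrow>
     (\<forall>W. openin T W \<and> upset T le W \<longrightarrow> U \<subseteq> T closure_of W \<longrightarrow> V \<subseteq> W)"

definition ker :: "'a topology \<Rightarrow> ('a \<Rightarrow> 'a \<Rightarrow> bool) \<Rightarrow> 'a set \<Rightarrow> 'a set" where
  "ker T le U = \<Union>{V \<in> ClopUp T le. way_below T le V U}"

definition core :: "'a topology \<Rightarrow> ('a \<Rightarrow> 'a \<Rightarrow> bool) \<Rightarrow> 'a set \<Rightarrow> 'a set" where
  "core T le U = \<Union>{V \<in> ClopSUp T le. V \<subseteq> U}"

definition cen :: "'a topology \<Rightarrow> ('a \<Rightarrow> 'a \<Rightarrow> bool) \<Rightarrow> 'a set \<Rightarrow> 'a set" where
  "cen T le U = \<Union>{V \<in> ClopBi T le. V \<subseteq> U}"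

definition L_compact :: "'a topology \<Rightarrow> ('a \<Rightarrow> 'a \<Rightarrow> bool) \<Rightarrow> bool" where
  "L_compact T le \<longleftrightarrow> topspace T = ker T le (topspace T)"

text \<open>A subset D of U is dense in U iff U is contained in the closure of D.\<close>
definition stone_L_space :: "'a topology \<Rightarrow> ('a \<Rightarrow> 'a \<Rightarrow> bool) \<Rightarrow> bool" where
  "stone_L_space T le \<longleftrightarrow> L_space T le \<and> L_compact T le \<and>
     (\<forall>U \<in> ClopUp T le. U \<subseteq> T closure_of (cen T le U))"

definition coherent_L_space :: "'a topology \<Rightarrow> ('a \<Rightarrow> 'a \<Rightarrow> bool) \<Rightarrow> bool" where
  "coherent_L_space T le \<longleftrightarrow> L_space T le \<and> L_compact T le \<and>
     (\<forall>U \<in> ClopUp T le. U \<subseteq> T closure_of (core T le U)) \<and>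
     (\<forall>U \<in> ClopUp T le. \<forall>V \<in> ClopUp T le. ker T le (U \<inter> V) = ker T le U \<inter> ker T le V)"

definition coherent_L_morphism ::
  "'a topology \<Rightarrow> ('a \<Rightarrow> 'a \<Rightarrow> bool) \<Rightarrow> 'b topology \<Rightarrow> ('b \<Rightarrow> 'b \<Rightarrow> bool) \<Rightarrow> ('a \<Rightarrow> 'b) \<Rightarrow> bool" where
  "coherent_L_morphism T1 le1 T2 le2 f \<longleftrightarrow> L_morphism T1 le1 T2 le2 f \<and>
     (\<forall>U \<in> ClopUp T2 le2.
        {x \<in> topspace T1. f x \<in> core T2 le2 U} \<subseteq> core T1 le1 {x \<in> topspace T1. f x \<in> U})"

end

(*
  In an L-compact L-space a dense open upset is the whole space. Applied to the complement
  of a minimal point x, this makes x isolated, so down x = {x} is clopen: every clopen biset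
  is a Scott upset, i.e. cen U <= core U. Applied to W Un (X - B) for a clopen biset B <= U,
  it gives B << U, so in a Stone L-space ker U = cen U for clopen upsets U.
  Conversely, in a Stone L-space a clopen Scott upset A lies in cen A: below each x in A
  there is a minimal m of A; down m is an open neighbourhood of m and so meets the dense
  upset cen A, whence m and x lie in cen A. Thus core = cen, and coherence of spaces and of
  morphisms reduces to cen commuting with intersections and with continuous monotone
  preimages.
*)
theory Submission
  imports Defs
begin

lemma partial_order_on_space_refl:
  "partial_order_on_space T le \<Longrightarrow> x \<in> topspace T \<Longrightarrow> le x x"
  unfolding partial_order_on_space_def by blast

lemma partial_order_on_space_antisym:
  "partial_order_on_space T le \<Longrightarrow> x \<in> topspace T \<Longrightarrow> y \<in> topspace T \<Longrightarrow> le x y \<Longrightarrow> le y x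
    \<Longrightarrow> x = y"
  unfolding partial_order_on_space_def by blast

lemma partial_order_on_space_trans:
  "partial_order_on_space T le \<Longrightarrow> x \<in> topspace T \<Longrightarrow> y \<in> topspace T \<Longrightarrow> z \<in> topspace T
    \<Longrightarrow> le x y \<Longrightarrow> le y z \<Longrightarrow> le x z"
  unfolding partial_order_on_space_def by blast

lemma compact_space_Inter_chain_nonempty:
  assumes "compact_space X" "\<forall>C\<in>\<C>. closedin X C \<and> C \<noteq> {}"
    and "\<forall>A\<in>\<C>. \<forall>B\<in>\<C>. A \<subseteq> B \<or> B \<subseteq> A"
  shows "\<Inter>\<C> \<noteq> {}"
proof -
  have "\<Inter>\<F> \<noteq> {}" if "finite \<F>" "\<F> \<subseteq> \<C>" for \<F>
  proof (cases "\<F> = {}")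
    case False
    have "subset.chain \<C> \<F>"
      using that assms(3) unfolding subset_chain_def by blast
    then have "\<Inter>\<F> \<in> \<F>"
      using Inter_in_chain[OF \<open>finite \<F>\<close> False] by blast
    then show ?thesis using that assms(2) by blast
  qed simp
  moreover have "\<forall>C\<in>\<C>. closedin X C" using assms(2) by blast
  ultimately show ?thesis
    using assms(1)[unfolded compact_space_fip, rule_format, of \<C>] by blast
qed

lemma closedin_down_of_singleton:
  assumes "priestley_space T le" "z \<in> topspace T"
  shows "closedin T (down_of T le {z})"
proof -
  have "openin T (topspace T - down_of T le {z})"
  proof (subst openin_subopen, intro ballI)
    fix w assume w: "w \<in> topspace T - down_of T le {z}"
    then have "\<not> le w z" by (auto simp: down_of_def)
    then obtain U where U: "clopen_in T U" "upset T le U" "w \<in> U" "z \<notin> U"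
      using assms w unfolding priestley_space_def by blast
    have "U \<subseteq> topspace T - down_of T le {z}"
      using U assms(2) unfolding upset_def down_of_def by auto
    then show "\<exists>V. openin T V \<and> w \<in> V \<and> V \<subseteq> topspace T - down_of T le {z}"
      using U unfolding clopen_in_def by blast
  qed
  then show ?thesis unfolding closedin_def down_of_def by auto
qed

lemma priestley_chain_has_lower_bound:
  assumes P: "priestley_space T le" and S: "closedin T S" and C: "C \<subseteq> S" "C \<noteq> {}"
    and chain: "\<forall>a\<in>C. \<forall>b\<in>C. le a b \<or> le b a"
  shows "\<exists>u\<in>S. \<forall>c\<in>C. le u c"
proof -
  have po: "partial_order_on_space T le" and "compact_space T"
    using P unfolding priestley_space_def stone_space_def by auto
  have ST: "S \<subseteq> topspace T" using S closedin_subset by blast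
  define \<C> where "\<C> = (\<lambda>c. S \<inter> down_of T le {c}) ` C"
  have "\<forall>A\<in>\<C>. closedin T A \<and> A \<noteq> {}"
    using C ST partial_order_on_space_refl[OF po]
      closedin_down_of_singleton[OF P] closedin_Int[OF S]
    unfolding \<C>_def down_of_def by blast
  moreover have "\<forall>A\<in>\<C>. \<forall>B\<in>\<C>. A \<subseteq> B \<or> B \<subseteq> A"
    using chain C ST partial_order_on_space_trans[OF po]
    unfolding \<C>_def down_of_def by (simp add: subset_iff) (meson subsetD)
  ultimately obtain u where "u \<in> \<Inter>\<C>"
    using compact_space_Inter_chain_nonempty[OF \<open>compact_space T\<close>] by blast
  then show ?thesis
    using C(2) unfolding \<C>_def down_of_def by auto
qed

lemma ex_minimal_below:
  assumes P: "priestley_space T le" and S: "closedin T S" and x: "x \<in> S"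
  shows "\<exists>m \<in> minimals le S. le m x"
proof -
  have po: "partial_order_on_space T le"
    using P unfolding priestley_space_def by auto
  have ST: "S \<subseteq> topspace T" using S closedin_subset by blast
  define K where "K = {z \<in> S. le z x}"
  have KT: "K \<subseteq> topspace T" using ST K_def by auto
  have "\<exists>m \<in> K. \<forall>a \<in> K. le a m \<longrightarrow> a = m"
  proof (rule predicate_Zorn[where P = "\<lambda>a b. le b a"])
    show "partial_order_on K (relation_of (\<lambda>a b. le b a) K)"
      using KT partial_order_on_space_refl[OF po] partial_order_on_space_antisym[OF po]
        partial_order_on_space_trans[OF po]
      by (intro partial_order_on_relation_ofI) (blast+)
  next
    fix C assume "C \<in> Chains (relation_of (\<lambda>a b. le b a) K)"
    then have CK: "C \<subseteq> K" and chain: "\<forall>a\<in>C. \<forall>b\<in>C. le a b \<or> le b a"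
      unfolding Chains_def relation_of_def by auto
    show "\<exists>u\<in>K. \<forall>c\<in>C. le u c"
    proof (cases "C = {}")
      case True
      then show ?thesis using x partial_order_on_space_refl[OF po] ST K_def by auto
    next
      case False
      then obtain c0 where c0: "c0 \<in> C" by auto
      obtain u where uS: "u \<in> S" and u_below: "\<forall>c\<in>C. le u c"
        using priestley_chain_has_lower_bound[OF P S _ False chain] CK K_def by blast
      have "le c0 x" "c0 \<in> topspace T"
        using c0 CK ST unfolding K_def by auto
      then have "le u x"
        using partial_order_on_space_trans[OF po, of u c0 x] uS u_below c0 ST x by blast
      then show ?thesis using uS u_below unfolding K_def by blast
    qed
  qed
  then obtain m where m: "m \<in> S" "le m x" "\<forall>a \<in> S. le a x \<longrightarrow> le a m \<longrightarrow> a = m"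
    unfolding K_def by auto
  have "m \<in> minimals le S"
    unfolding minimals_def
  proof (intro CollectI conjI ballI impI)
    fix y assume "y \<in> S" "le y m"
    then show "y = m"
      using m partial_order_on_space_trans[OF po, of y m x] ST x by blast
  qed (use m in blast)
  then show ?thesis using m by blast
qed

lemma L_compact_dense_open_upset:
  assumes "L_compact T le" "openin T W" "upset T le W" "topspace T \<subseteq> T closure_of W"
  shows "W = topspace T"
proof
  show "W \<subseteq> topspace T" using assms(2) by (rule openin_subset)
  show "topspace T \<subseteq> W"
  proof
    fix z assume "z \<in> topspace T"
    then obtain V where "way_below T le V (topspace T)" "z \<in> V"
      using assms(1) unfolding L_compact_def ker_def by auto
    then show "z \<in> W" using assms(2-4) unfolding way_below_def by blast
  qed
qed

lemma openin_singleton_if_minimal: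
  assumes "Hausdorff_space T" "L_compact T le" "x \<in> topspace T"
    and minimal: "\<forall>y\<in>topspace T. le y x \<longrightarrow> y = x"
  shows "openin T {x}"
proof -
  define W where "W = topspace T - {x}"
  have "openin T W"
    unfolding W_def using closedin_Hausdorff_singleton[OF assms(1,3)] by blast
  moreover have "upset T le W" using minimal unfolding upset_def W_def by auto
  moreover have "W \<noteq> topspace T" using assms(3) unfolding W_def by auto
  ultimately have "\<not> topspace T \<subseteq> T closure_of W"
    using L_compact_dense_open_upset[OF assms(2)] by blast
  then have "topspace T - T closure_of W = {x}"
    using closure_of_subset[of W T] closure_of_subset_topspace[of T W] unfolding W_def by auto
  then show ?thesis by (metis closedin_closure_of openin_diff openin_topspace)
qed

lemma ClopBi_subset_ClopSUp:
  assumes P: "priestley_space T le" and K: "L_compact T le"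
  shows "ClopBi T le \<subseteq> ClopSUp T le"
proof
  fix B assume B: "B \<in> ClopBi T le"
  have H: "Hausdorff_space T" and po: "partial_order_on_space T le"
    using P unfolding priestley_space_def stone_space_def by auto
  have "minimals le B \<subseteq> spatial_part T le"
  proof
    fix x assume "x \<in> minimals le B"
    then have xB: "x \<in> B" and "\<forall>y\<in>B. le y x \<longrightarrow> y = x" unfolding minimals_def by auto
    moreover have xT: "x \<in> topspace T" and "downset T le B"
      using xB B unfolding ClopBi_def downset_def by auto
    ultimately have minimal: "\<forall>y\<in>topspace T. le y x \<longrightarrow> y = x"
      unfolding downset_def by blast
    then have "down_of T le {x} = {x}"
      using partial_order_on_space_refl[OF po xT] xT unfolding down_of_def by auto
    moreover have "clopen_in T {x}"
      using openin_singleton_if_minimal[OF H K xT minimal] closedin_Hausdorff_singleton[OF H xT]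
      unfolding clopen_in_def by blast
    ultimately show "x \<in> spatial_part T le" unfolding spatial_part_def using xT by auto
  qed
  then show "B \<in> ClopSUp T le"
    using B unfolding ClopBi_def ClopSUp_def scott_upset_def clopen_in_def by auto
qed

lemma cen_subset_core:
  assumes "priestley_space T le" "L_compact T le"
  shows "cen T le U \<subseteq> core T le U"
  using ClopBi_subset_ClopSUp[OF assms] unfolding cen_def core_def by blast

lemma openin_cen: "openin T (cen T le U)"
  unfolding cen_def ClopBi_def clopen_in_def by auto

lemma upset_cen: "upset T le (cen T le U)"
  unfolding cen_def ClopBi_def upset_def by auto

lemma cen_mono: "U \<subseteq> V \<Longrightarrow> cen T le U \<subseteq> cen T le V"
  unfolding cen_def by auto

lemma ClopBi_Int: "A \<in> ClopBi T le \<Longrightarrow> B \<in> ClopBi T le \<Longrightarrow> A \<inter> B \<in> ClopBi T le"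
  unfolding ClopBi_def clopen_in_def upset_def downset_def by (blast intro: openin_Int closedin_Int)

lemma ClopUp_Int: "U \<in> ClopUp T le \<Longrightarrow> V \<in> ClopUp T le \<Longrightarrow> U \<inter> V \<in> ClopUp T le"
  unfolding ClopUp_def clopen_in_def upset_def by (blast intro: openin_Int closedin_Int)

lemma cen_Int: "cen T le (U \<inter> V) = cen T le U \<inter> cen T le V"
proof
  show "cen T le (U \<inter> V) \<subseteq> cen T le U \<inter> cen T le V"
    by (simp add: cen_mono)
  show "cen T le U \<inter> cen T le V \<subseteq> cen T le (U \<inter> V)"
  proof
    fix x assume "x \<in> cen T le U \<inter> cen T le V"
    then obtain A B where "A \<in> ClopBi T le" "A \<subseteq> U" "x \<in> A" "B \<in> ClopBi T le" "B \<subseteq> V" "x \<in> B"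
      unfolding cen_def by auto
    then show "x \<in> cen T le (U \<inter> V)"
      using ClopBi_Int unfolding cen_def by blast
  qed
qed

lemma ClopSUp_subset_cen:
  assumes S: "stone_L_space T le" and A: "A \<in> ClopSUp T le"
  shows "A \<subseteq> cen T le A"
proof
  fix x assume xA: "x \<in> A"
  have P: "priestley_space T le"
    using S unfolding stone_L_space_def L_space_def by blast
  have Aclosed: "closedin T A" and Aup: "upset T le A"
    and spatial: "minimals le A \<subseteq> spatial_part T le"
    using A unfolding ClopSUp_def scott_upset_def by auto
  have "A \<in> ClopUp T le"
    using A unfolding ClopSUp_def ClopUp_def scott_upset_def by blast
  then have dense: "A \<subseteq> T closure_of (cen T le A)"
    using S unfolding stone_L_space_def by blast
  obtain m where m: "m \<in> minimals le A" "le m x"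
    using ex_minimal_below[OF P Aclosed xA] by blast
  have mA: "m \<in> A" using m(1) unfolding minimals_def by blast
  have mT: "m \<in> topspace T" using mA Aup unfolding upset_def by blast
  have "m \<in> spatial_part T le" using m(1) spatial by blast
  then have "openin T (down_of T le {m})" by (simp add: spatial_part_def clopen_in_def)
  moreover have "m \<in> down_of T le {m}"
    using P mT partial_order_on_space_refl[of T le m] unfolding priestley_space_def down_of_def
    by blast
  moreover have "m \<in> T closure_of (cen T le A)" using dense mA by blast
  ultimately obtain w where "w \<in> cen T le A" "w \<in> down_of T le {m}"
    unfolding in_closure_of by blast
  then have "w \<in> cen T le A" "le w m" by (auto simp: down_of_def)
  then have "m \<in> cen T le A"
    using upset_cen[of T le A] mT unfolding upset_def by blast
  then show "x \<in> cen T le A"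
    using upset_cen[of T le A] m(2) xA Aup unfolding upset_def by blast
qed

lemma core_eq_cen:
  assumes S: "stone_L_space T le"
  shows "core T le U = cen T le U"
proof
  show "core T le U \<subseteq> cen T le U"
    using ClopSUp_subset_cen[OF S] cen_mono unfolding core_def by blast
  show "cen T le U \<subseteq> core T le U"
    using S cen_subset_core unfolding stone_L_space_def L_space_def by blast
qed

lemma way_below_if_ClopBi:
  assumes K: "L_compact T le" and B: "B \<in> ClopBi T le" "B \<subseteq> U"
  shows "way_below T le B U"
  unfolding way_below_def
proof (intro allI impI)
  fix W assume W: "openin T W \<and> upset T le W" and UW: "U \<subseteq> T closure_of W"
  have BT: "B \<subseteq> topspace T" using B unfolding ClopBi_def upset_def by auto
  define W' where "W' = W \<union> (topspace T - B)"
  have "openin T W'" unfolding W'_def using W B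
    by (simp add: ClopBi_def clopen_in_def openin_Un openin_diff)
  moreover have "upset T le W'" unfolding W'_def using W B
    unfolding upset_def ClopBi_def downset_def by blast
  moreover have "topspace T \<subseteq> T closure_of W'"
  proof -
    have "T closure_of W \<subseteq> T closure_of W'" unfolding W'_def by (simp add: closure_of_mono)
    moreover have "topspace T - B \<subseteq> T closure_of W'"
      using closure_of_subset[of W' T] W unfolding W'_def by (auto dest: openin_subset)
    ultimately show ?thesis using UW B(2) BT by blast
  qed
  ultimately have "W' = topspace T" by (rule L_compact_dense_open_upset[OF K])
  then show "B \<subseteq> W" using BT unfolding W'_def by auto
qed

lemma ker_eq_cen:
  assumes S: "stone_L_space T le" and U: "U \<in> ClopUp T le"
  shows "ker T le U = cen T le U"
proof
  show "ker T le U \<subseteq> cen T le U"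
  proof
    fix x assume "x \<in> ker T le U"
    then obtain V where "way_below T le V U" "x \<in> V" unfolding ker_def by blast
    moreover have "U \<subseteq> T closure_of (cen T le U)" using S U by (simp add: stone_L_space_def)
    ultimately have "V \<subseteq> cen T le U"
      using openin_cen[of T le U] upset_cen[of T le U] unfolding way_below_def by blast
    then show "x \<in> cen T le U" using \<open>x \<in> V\<close> by blast
  qed
  show "cen T le U \<subseteq> ker T le U"
  proof
    fix x assume "x \<in> cen T le U"
    then obtain B where B: "B \<in> ClopBi T le" "B \<subseteq> U" "x \<in> B" unfolding cen_def by blast
    have "L_compact T le" using S unfolding stone_L_space_def by blast
    then have "way_below T le B U" using B(1,2) by (rule way_below_if_ClopBi)
    moreover have "B \<in> ClopUp T le" using B(1) unfolding ClopBi_def ClopUp_def by blast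
    ultimately show "x \<in> ker T le U" using B(3) unfolding ker_def by blast
  qed
qed

lemma ClopBi_preimage:
  assumes f: "continuous_map T1 T2 f"
    and mono: "\<forall>x\<in>topspace T1. \<forall>y\<in>topspace T1. le1 x y \<longrightarrow> le2 (f x) (f y)"
    and B: "B \<in> ClopBi T2 le2"
  shows "{x \<in> topspace T1. f x \<in> B} \<in> ClopBi T1 le1"
proof -
  have "openin T2 B" "closedin T2 B" "upset T2 le2 B" "downset T2 le2 B"
    using B unfolding ClopBi_def clopen_in_def by auto
  moreover have "f x \<in> topspace T2" if "x \<in> topspace T1" for x
    using f that unfolding continuous_map_def by blast
  ultimately show ?thesis
    using openin_continuous_map_preimage[OF f] closedin_continuous_map_preimage[OF f] mono
    unfolding ClopBi_def clopen_in_def upset_def downset_def by (blast intro: openin_Int closedin_Int)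
qed

lemma cen_preimage_subset:
  assumes "continuous_map T1 T2 f"
    and "\<forall>x\<in>topspace T1. \<forall>y\<in>topspace T1. le1 x y \<longrightarrow> le2 (f x) (f y)"
  shows "{x \<in> topspace T1. f x \<in> cen T2 le2 U} \<subseteq> cen T1 le1 {x \<in> topspace T1. f x \<in> U}"
proof
  fix x assume "x \<in> {x \<in> topspace T1. f x \<in> cen T2 le2 U}"
  then obtain B where "B \<in> ClopBi T2 le2" "B \<subseteq> U" "x \<in> topspace T1" "f x \<in> B"
    unfolding cen_def by auto
  then show "x \<in> cen T1 le1 {x \<in> topspace T1. f x \<in> U}"
    using ClopBi_preimage[OF assms] unfolding cen_def by blast
qed

theorem theorem5p14:
  fixes T :: "'a topology" and le :: "'a \<Rightarrow> 'a \<Rightarrow> bool"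
    and T1 :: "'a topology" and le1 :: "'a \<Rightarrow> 'a \<Rightarrow> bool"
    and T2 :: "'b topology" and le2 :: "'b \<Rightarrow> 'b \<Rightarrow> bool"
    and f :: "'a \<Rightarrow> 'b"
  shows "(stone_L_space T le \<longrightarrow> coherent_L_space T le) \<and>
         (stone_L_space T1 le1 \<and> stone_L_space T2 le2 \<and> L_morphism T1 le1 T2 le2 f
            \<longrightarrow> coherent_L_morphism T1 le1 T2 le2 f)"
proof (intro conjI impI)
  assume S: "stone_L_space T le"
  then have "\<forall>U \<in> ClopUp T le. U \<subseteq> T closure_of (core T le U)"
    by (simp add: stone_L_space_def core_eq_cen)
  moreover have "\<forall>U \<in> ClopUp T le. \<forall>V \<in> ClopUp T le. ker T le (U \<inter> V) = ker T le U \<inter> ker T le V"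
    using S by (simp add: ker_eq_cen ClopUp_Int cen_Int)
  ultimately show "coherent_L_space T le"
    using S unfolding stone_L_space_def coherent_L_space_def by blast
next
  assume "stone_L_space T1 le1 \<and> stone_L_space T2 le2 \<and> L_morphism T1 le1 T2 le2 f"
  then have S1: "stone_L_space T1 le1" and S2: "stone_L_space T2 le2"
    and M: "L_morphism T1 le1 T2 le2 f" by auto
  then have "{x \<in> topspace T1. f x \<in> core T2 le2 U} \<subseteq> core T1 le1 {x \<in> topspace T1. f x \<in> U}"
    for U
    using cen_preimage_subset[of T1 T2 f le1 le2 U]
    unfolding core_eq_cen[OF S1] core_eq_cen[OF S2] L_morphism_def by blast
  then show "coherent_L_morphism T1 le1 T2 le2 f"
    using M unfolding coherent_L_morphism_def by blast
qed

end
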